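(* Let $k\ge1$, let $(A,t)$ be a $\mathcal{C}_k$-algebra and $F\subseteq A$. Then $F$ is a cyclic deductive system of $A$ if and only if $F$ is a $c$-filter of $A$.
   Context: A modal pseudocomplemented De Morgan algebra ($mpM$-algebra) is an algebra $\langle A,\wedge,\vee,\sim,{}^\ast,0,1\rangle$ such that $\langle A,\wedge,\vee,\sim,0,1\rangle$ is a De Morgan algebra (bounded distributive lattice with $\sim\sim x=x$, $\sim(x\vee y)=\sim x\wedge\sim y$), $x^\ast$ is the pseudocomplement of $x$, and $x\vee\sim x\le x\vee x^\ast$. Put $\nabla x=\sim(\sim x\wedge x^\ast)$, $\triangle x=\sim\nabla\sim x$. A $\mathcal{C}_k$-algebra ($k\ge1$) is a pair $(A,t)$ with $A$ an $mpM$-algebra and $t$ an $mpM$-automorphism of $A$ with $t^k=\mathrm{id}$. The cyclic implication is $a\rightharpoondown b=\bigvee_{i=1}^{k}\nabla(\sim t^i(a))\vee b$. A cyclic deductive system is a set $D\subseteq A$ with $1\in D$ such that $x\in D$ and $x\rightharpoondown y\in D$ imply $y\in D$. A $c$-filter is a lattice filter $F$ of $A$ such that $x\in F$ implies $\triangle x\in F$ and $t(x)\in F$. *)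

theory Defs
  imports Main
begin

text \<open>The underlying bounded distributive lattice is the type class structure of 'a
  (inf, sup, bot = 0, top = 1). The De Morgan negation and the pseudocomplement are
  explicit operations.\<close>

definition de_morgan :: "('a::{distrib_lattice,bounded_lattice} \<Rightarrow> 'a) \<Rightarrow> bool" where
  "de_morgan neg \<longleftrightarrow> (\<forall>x. neg (neg x) = x) \<and> (\<forall>x y. neg (sup x y) = inf (neg x) (neg y))"

definition is_pseudocomplement :: "('a::{distrib_lattice,bounded_lattice} \<Rightarrow> 'a) \<Rightarrow> bool" where
  "is_pseudocomplement star \<longleftrightarrow> (\<forall>x y. inf x y = bot \<longleftrightarrow> y \<le> star x)"

definition mpM_algebra :: "('a::{distrib_lattice,bounded_lattice} \<Rightarrow> 'a) \<Rightarrow> ('a \<Rightarrow> 'a) \<Rightarrow> bool" where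
  "mpM_algebra neg star \<longleftrightarrow> de_morgan neg \<and> is_pseudocomplement star \<and>
     (\<forall>x. sup x (neg x) \<le> sup x (star x))"

definition mpM_automorphism ::
  "('a::{distrib_lattice,bounded_lattice} \<Rightarrow> 'a) \<Rightarrow> ('a \<Rightarrow> 'a) \<Rightarrow> ('a \<Rightarrow> 'a) \<Rightarrow> bool" where
  "mpM_automorphism neg star t \<longleftrightarrow> bij t \<and>
     (\<forall>x y. t (inf x y) = inf (t x) (t y)) \<and> (\<forall>x y. t (sup x y) = sup (t x) (t y)) \<and>
     (\<forall>x. t (neg x) = neg (t x)) \<and> (\<forall>x. t (star x) = star (t x)) \<and>
     t bot = bot \<and> t top = top"

definition Ck_algebra ::
  "nat \<Rightarrow> ('a::{distrib_lattice,bounded_lattice} \<Rightarrow> 'a) \<Rightarrow> ('a \<Rightarrow> 'a) \<Rightarrow> ('a \<Rightarrow> 'a) \<Rightarrow> bool" where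
  "Ck_algebra k neg star t \<longleftrightarrow> mpM_algebra neg star \<and> mpM_automorphism neg star t \<and> t ^^ k = id"

definition nabla :: "('a::{distrib_lattice,bounded_lattice} \<Rightarrow> 'a) \<Rightarrow> ('a \<Rightarrow> 'a) \<Rightarrow> 'a \<Rightarrow> 'a" where
  "nabla neg star x = neg (inf (neg x) (star x))"

definition tri :: "('a::{distrib_lattice,bounded_lattice} \<Rightarrow> 'a) \<Rightarrow> ('a \<Rightarrow> 'a) \<Rightarrow> 'a \<Rightarrow> 'a" where
  "tri neg star x = neg (nabla neg star (neg x))"

definition cimp ::
  "nat \<Rightarrow> ('a::{distrib_lattice,bounded_lattice} \<Rightarrow> 'a) \<Rightarrow> ('a \<Rightarrow> 'a) \<Rightarrow> ('a \<Rightarrow> 'a) \<Rightarrow> 'a \<Rightarrow> 'a \<Rightarrow> 'a" where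
  "cimp k neg star t a b =
     sup (Sup_fin ((\<lambda>i. nabla neg star (neg ((t ^^ i) a))) ` {1..k})) b"

definition cyclic_ds ::
  "nat \<Rightarrow> ('a::{distrib_lattice,bounded_lattice} \<Rightarrow> 'a) \<Rightarrow> ('a \<Rightarrow> 'a) \<Rightarrow> ('a \<Rightarrow> 'a) \<Rightarrow> 'a set \<Rightarrow> bool" where
  "cyclic_ds k neg star t D \<longleftrightarrow> top \<in> D \<and>
     (\<forall>x y. x \<in> D \<longrightarrow> cimp k neg star t x y \<in> D \<longrightarrow> y \<in> D)"

definition lattice_filter :: "'a::{distrib_lattice,bounded_lattice} set \<Rightarrow> bool" where
  "lattice_filter F \<longleftrightarrow> F \<noteq> {} \<and> (\<forall>x y. x \<in> F \<longrightarrow> x \<le> y \<longrightarrow> y \<in> F) \<and>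
     (\<forall>x y. x \<in> F \<longrightarrow> y \<in> F \<longrightarrow> inf x y \<in> F)"

definition c_filter ::
  "('a::{distrib_lattice,bounded_lattice} \<Rightarrow> 'a) \<Rightarrow> ('a \<Rightarrow> 'a) \<Rightarrow> ('a \<Rightarrow> 'a) \<Rightarrow> 'a set \<Rightarrow> bool" where
  "c_filter neg star t F \<longleftrightarrow> lattice_filter F \<and>
     (\<forall>x. x \<in> F \<longrightarrow> tri neg star x \<in> F) \<and> (\<forall>x. x \<in> F \<longrightarrow> t x \<in> F)"

end

theory Submission
  imports Defs
begin

text \<open>Every \<open>\<triangle>x\<close> is complemented, with complement \<open>\<sim>\<triangle>x = \<nabla>\<sim>x\<close>. Hence
  \<open>x \<rightharpoondown> y\<close> is \<open>\<top>\<close> as soon as \<open>\<triangle>(t\<^sup>i x) \<le> y\<close> for some \<open>1 \<le> i \<le> k\<close>, which with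
  \<open>t\<^sup>k = id\<close> and \<open>i = 1\<close> shows that a cyclic deductive system is an upward closed set
  closed under \<open>\<triangle>\<close>, \<open>t\<close> and meets. Conversely the meet of the \<open>\<triangle>(t\<^sup>i x)\<close> is
  disjoint from every \<open>\<nabla>\<sim>(t\<^sup>i x)\<close>, so its meet with \<open>x \<rightharpoondown> y\<close> lies below \<open>y\<close>;
  this element belongs to any \<open>c\<close>-filter containing \<open>x\<close>, which gives modus ponens.\<close>

lemma de_morgan_neg_neg: "de_morgan neg \<Longrightarrow> neg (neg x) = x"
  by (simp add: de_morgan_def)

lemma de_morgan_neg_sup: "de_morgan neg \<Longrightarrow> neg (sup x y) = inf (neg x) (neg y)"
  by (simp add: de_morgan_def)

lemma de_morgan_neg_inf: "de_morgan neg \<Longrightarrow> neg (inf x y) = sup (neg x) (neg y)"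
  by (metis de_morgan_neg_neg de_morgan_neg_sup)

lemma de_morgan_neg_antimono:
  "de_morgan neg \<Longrightarrow> (x::'a::{distrib_lattice,bounded_lattice}) \<le> y \<Longrightarrow> neg y \<le> neg x"
  by (metis de_morgan_neg_sup inf.cobounded1 sup.absorb2)

lemma de_morgan_neg_bot: "de_morgan neg \<Longrightarrow> neg (bot::'a::{distrib_lattice,bounded_lattice}) = top"
  by (metis de_morgan_neg_antimono de_morgan_neg_neg bot_least top_unique)

lemma pseudocomplement_disjoint_iff:
  "is_pseudocomplement star \<Longrightarrow> inf x y = bot \<longleftrightarrow> y \<le> star x"
  by (simp add: is_pseudocomplement_def)

lemma tri_eq: "de_morgan neg \<Longrightarrow> tri neg star x = inf x (star (neg x))"
  by (simp add: tri_def nabla_def de_morgan_neg_neg)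

lemma tri_le: "de_morgan neg \<Longrightarrow> tri neg star x \<le> x"
  by (simp add: tri_eq)

lemma nabla_neg: "de_morgan neg \<Longrightarrow> nabla neg star (neg x) = neg (tri neg star x)"
  by (simp add: tri_def de_morgan_neg_neg)

lemma inf_tri_neg_tri:
  fixes x :: "'a::{distrib_lattice,bounded_lattice}"
  assumes "mpM_algebra neg star"
  shows "inf (tri neg star x) (neg (tri neg star x)) = bot"
proof -
  have dm: "de_morgan neg" and pc: "is_pseudocomplement star"
    and ax: "sup (neg x) (neg (neg x)) \<le> sup (neg x) (star (neg x))"
    using assms by (auto simp: mpM_algebra_def)
  define w where "w = star (neg x)"
  have disj: "inf (neg x) w = bot"
    using pseudocomplement_disjoint_iff[OF pc] by (simp add: w_def)
  \<comment> \<open>the defining inequality of \<open>mpM\<close>-algebras, at \<open>\<sim>x\<close> and negated\<close>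
  have "inf x (neg w) \<le> inf x (neg x)"
    using de_morgan_neg_antimono[OF dm ax]
    by (simp add: w_def de_morgan_neg_sup[OF dm] de_morgan_neg_neg[OF dm] inf_commute)
  then have "inf w (inf x (neg w)) \<le> inf (neg x) w"
    by (simp add: inf_commute le_infI2)
  then have "inf (inf x w) (neg w) \<le> inf (neg x) w"
    by (simp add: inf_aci)
  then have "inf (inf x w) (neg w) = bot"
    by (simp add: disj bot_unique)
  moreover have "inf (inf x w) (neg x) = bot"
    using disj by (metis inf.commute inf.left_commute inf_bot_right)
  ultimately show ?thesis
    by (simp add: tri_eq[OF dm] de_morgan_neg_inf[OF dm] inf_sup_distrib1 w_def)
qed

lemma sup_neg_tri_tri:
  fixes x :: "'a::{distrib_lattice,bounded_lattice}"
  assumes "mpM_algebra neg star"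
  shows "sup (neg (tri neg star x)) (tri neg star x) = top"
proof -
  have dm: "de_morgan neg" using assms by (simp add: mpM_algebra_def)
  have "neg (inf (tri neg star x) (neg (tri neg star x))) = top"
    by (simp add: inf_tri_neg_tri[OF assms] de_morgan_neg_bot[OF dm])
  then show ?thesis by (simp add: de_morgan_neg_inf[OF dm] de_morgan_neg_neg[OF dm] sup_commute)
qed

lemma sup_neg_tri_eq_top:
  "mpM_algebra neg star \<Longrightarrow> tri neg star x \<le> y \<Longrightarrow> sup (neg (tri neg star x)) y = top"
  by (metis sup_neg_tri_tri sup.mono order_refl top_unique)

lemma sup_neg_tri_le_cimp:
  assumes "de_morgan neg" and "i \<in> {1..k}"
  shows "sup (neg (tri neg star ((t ^^ i) x))) y \<le> cimp k neg star t x y"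
proof -
  have "nabla neg star (neg ((t ^^ i) x))
          \<le> Sup_fin ((\<lambda>i. nabla neg star (neg ((t ^^ i) x))) ` {1..k})"
    using assms(2) by (intro Sup_fin.coboundedI) auto
  then show ?thesis
    unfolding cimp_def by (simp add: nabla_neg[OF assms(1)] le_supI1)
qed

lemma cimp_eq_top:
  assumes "mpM_algebra neg star" and "i \<in> {1..k}" and "tri neg star ((t ^^ i) x) \<le> y"
  shows "cimp k neg star t x y = top"
  using sup_neg_tri_le_cimp[of neg i k star t x y] sup_neg_tri_eq_top[OF assms(1,3)] assms(1,2)
  by (simp add: mpM_algebra_def top_unique)

lemma le_cimp_inf:
  assumes "mpM_algebra neg star" and "k \<ge> 1" and "t ^^ k = id"
  shows "x \<le> cimp k neg star t y (inf x y)"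
proof -
  have dm: "de_morgan neg" using assms(1) by (simp add: mpM_algebra_def)
  have "sup (neg (tri neg star y)) y = top"
    using sup_neg_tri_eq_top[OF assms(1) tri_le[OF dm]] .
  then have "x \<le> sup (neg (tri neg star y)) (inf x y)"
    by (simp add: sup_inf_distrib1)
  also have "\<dots> \<le> cimp k neg star t y (inf x y)"
    using sup_neg_tri_le_cimp[OF dm, of k k star t y "inf x y"] assms(2,3) by simp
  finally show ?thesis .
qed

lemma inf_Inf_fin_tri_cimp_le:
  fixes x y :: "'a::{distrib_lattice,bounded_lattice}"
  assumes "mpM_algebra neg star" and "k \<ge> 1"
  shows "inf (Inf_fin ((\<lambda>i. tri neg star ((t ^^ i) x)) ` {1..k})) (cimp k neg star t x y) \<le> y"
proof -
  have dm: "de_morgan neg" and pc: "is_pseudocomplement star"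
    using assms(1) by (auto simp: mpM_algebra_def)
  define a where "a = Inf_fin ((\<lambda>i. tri neg star ((t ^^ i) x)) ` {1..k})"
  have "nabla neg star (neg ((t ^^ i) x)) \<le> star a" if "i \<in> {1..k}" for i
  proof -
    have "a \<le> tri neg star ((t ^^ i) x)"
      unfolding a_def using that by (intro Inf_fin.coboundedI) auto
    then have "inf a (neg (tri neg star ((t ^^ i) x))) = bot"
      using inf_tri_neg_tri[OF assms(1)] by (metis inf_mono order_refl bot_unique)
    then show ?thesis
      by (simp add: nabla_neg[OF dm] pseudocomplement_disjoint_iff[OF pc])
  qed
  then have "Sup_fin ((\<lambda>i. nabla neg star (neg ((t ^^ i) x))) ` {1..k}) \<le> star a"
    using assms(2) by (subst Sup_fin.bounded_iff) auto
  then have "inf a (Sup_fin ((\<lambda>i. nabla neg star (neg ((t ^^ i) x))) ` {1..k})) = bot"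
    by (simp add: pseudocomplement_disjoint_iff[OF pc])
  then show ?thesis
    unfolding a_def[symmetric] cimp_def by (simp add: inf_sup_distrib1)
qed

lemma lattice_filter_upward: "lattice_filter F \<Longrightarrow> x \<in> F \<Longrightarrow> x \<le> y \<Longrightarrow> y \<in> F"
  unfolding lattice_filter_def by blast

lemma lattice_filter_inf: "lattice_filter F \<Longrightarrow> x \<in> F \<Longrightarrow> y \<in> F \<Longrightarrow> inf x y \<in> F"
  unfolding lattice_filter_def by blast

lemma lattice_filter_top: "lattice_filter F \<Longrightarrow> top \<in> F"
  unfolding lattice_filter_def by (metis all_not_in_conv top_greatest)

lemma lattice_filterI:
  assumes "top \<in> F" and "\<And>x y. x \<in> F \<Longrightarrow> x \<le> y \<Longrightarrow> y \<in> F"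
    and "\<And>x y. x \<in> F \<Longrightarrow> y \<in> F \<Longrightarrow> inf x y \<in> F"
  shows "lattice_filter F"
  using assms unfolding lattice_filter_def by blast

lemma lattice_filter_Inf_fin:
  assumes "lattice_filter F" and "finite I" and "I \<noteq> {}" and "I \<subseteq> F"
  shows "Inf_fin I \<in> F"
  using assms(2-4)
proof (induction I rule: finite_ne_induct)
  case (singleton x)
  then show ?case by simp
next
  case (insert x I)
  then show ?case by (simp add: lattice_filter_inf[OF assms(1)])
qed

lemma c_filter_funpow: "c_filter neg star t F \<Longrightarrow> x \<in> F \<Longrightarrow> (t ^^ i) x \<in> F"
  by (induction i) (auto simp: c_filter_def)

lemma cyclic_ds_imp_c_filter:
  assumes "mpM_algebra neg star" and "k \<ge> 1" and "t ^^ k = id"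
    and "cyclic_ds k neg star t F"
  shows "c_filter neg star t F"
proof -
  have dm: "de_morgan neg" using assms(1) by (simp add: mpM_algebra_def)
  have top: "top \<in> F" and mp: "\<And>x y. x \<in> F \<Longrightarrow> cimp k neg star t x y \<in> F \<Longrightarrow> y \<in> F"
    using assms(4) unfolding cyclic_ds_def by blast+
  have by_cimp_top: "y \<in> F" if "x \<in> F" "i \<in> {1..k}" "tri neg star ((t ^^ i) x) \<le> y" for x y i
    by (rule mp[OF that(1)]) (simp add: cimp_eq_top[OF assms(1) that(2,3)] top)
  have up: "y \<in> F" if "x \<in> F" "x \<le> y" for x y
    by (rule by_cimp_top[where i = k, OF that(1)])
      (use assms(2,3) order_trans[OF tri_le[OF dm] that(2)] in simp_all)
  have meet: "inf x y \<in> F" if "x \<in> F" "y \<in> F" for x y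
    using mp[OF that(2) up[OF that(1) le_cimp_inf[OF assms(1-3)]]] .
  have tri_mem: "tri neg star x \<in> F" if "x \<in> F" for x
    by (rule by_cimp_top[where i = k, OF that]) (use assms(2,3) in simp_all)
  have t_mem: "t x \<in> F" if "x \<in> F" for x
    by (rule by_cimp_top[where i = 1, OF that]) (use assms(2) tri_le[OF dm] in simp_all)
  show ?thesis
    unfolding c_filter_def by (intro conjI allI impI lattice_filterI[OF top up meet] tri_mem t_mem)
qed

lemma c_filter_imp_cyclic_ds:
  assumes "mpM_algebra neg star" and "k \<ge> 1" and "c_filter neg star t F"
  shows "cyclic_ds k neg star t F"
proof -
  have filter: "lattice_filter F" and tri_mem: "\<And>x. x \<in> F \<Longrightarrow> tri neg star x \<in> F"
    using assms(3) by (simp_all add: c_filter_def)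
  have modus_ponens: "y \<in> F" if x: "x \<in> F" and c: "cimp k neg star t x y \<in> F" for x y
  proof -
    let ?a = "Inf_fin ((\<lambda>i. tri neg star ((t ^^ i) x)) ` {1..k})"
    have "?a \<in> F"
    proof (rule lattice_filter_Inf_fin[OF filter])
      show "(\<lambda>i. tri neg star ((t ^^ i) x)) ` {1..k} \<subseteq> F"
        by (intro image_subsetI tri_mem c_filter_funpow[OF assms(3) x])
    qed (use assms(2) in auto)
    then have "inf ?a (cimp k neg star t x y) \<in> F"
      using c by (rule lattice_filter_inf[OF filter])
    moreover have "inf ?a (cimp k neg star t x y) \<le> y"
      by (rule inf_Inf_fin_tri_cimp_le[OF assms(1,2)])
    ultimately show ?thesis
      by (rule lattice_filter_upward[OF filter])
  qed
  show ?thesis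
    unfolding cyclic_ds_def using lattice_filter_top[OF filter] modus_ponens by blast
qed

theorem lemma3p2:
  fixes neg star t :: "'a::{distrib_lattice,bounded_lattice} \<Rightarrow> 'a"
    and k :: nat and F :: "'a set"
  assumes "k \<ge> 1" and "Ck_algebra k neg star t"
  shows "cyclic_ds k neg star t F \<longleftrightarrow> c_filter neg star t F"
proof -
  have mpM: "mpM_algebra neg star" and period: "t ^^ k = id"
    using assms(2) by (auto simp: Ck_algebra_def)
  show ?thesis
    using cyclic_ds_imp_c_filter[OF mpM assms(1) period] c_filter_imp_cyclic_ds[OF mpM assms(1)]
    by blast
qed

end
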